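(* Let $d\ge1$, let $Z$ be a simple $d$-cycle, and let $D\subseteq\mathrm{Supp}(Z)$. Then the graph obtained from $G_d(Z)$ by deleting the vertices corresponding to $D$ has at most $1+\tilde\beta_{d-1}(K(D))$ connected components, where $\tilde\beta_{d-1}(K(D))=\dim\tilde H_{d-1}(K(D))$.
   Context: Fix a field $\mathbb F$. A $d$-simplex is a $(d+1)$-element subset of $[n]$ oriented by increasing order $s_1<\dots<s_{d+1}$; the empty set is the $(-1)$-simplex. A $d$-chain is a formal $\mathbb F$-combination of $d$-simplices with support the set of simplices with nonzero coefficient; $\partial\sigma=\sum_i(-1)^{i-1}(\sigma\setminus\{s_i\})$, extended linearly (reduced convention). A $d$-cycle is a chain with $\partial Z=0$; it is simple if $Z\ne0$ and every $d$-cycle supported in $\mathrm{Supp}(Z)$ is a scalar multiple of $Z$. For a set $S$ of simplices, $K(S)$ is the complex of all subsets of members of $S$; $\tilde H_{d-1}(K)$ is the space of $(d-1)$-cycles supported on $K$ modulo $\{\partial B: B$ a $d$-chain supported on $K\}$. The facet graph $G_d(Z)$ has vertex set $\mathrm{Supp}(Z)$, two $d$-simplices adjacent iff they share a $(d-1)$-face. *)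

theory Defs
  imports Complex_Main "HOL-Library.Function_Algebras"
begin

definition simplex :: "nat \<Rightarrow> nat \<Rightarrow> nat set \<Rightarrow> bool" where
  "simplex n d \<sigma> \<longleftrightarrow> \<sigma> \<subseteq> {1..n} \<and> card \<sigma> = d + 1"

definition supp :: "(nat set \<Rightarrow> 'a::zero) \<Rightarrow> nat set set" where
  "supp c = {\<sigma>. c \<sigma> \<noteq> 0}"

definition is_chain :: "nat \<Rightarrow> nat \<Rightarrow> (nat set \<Rightarrow> 'a::zero) \<Rightarrow> bool" where
  "is_chain n d c \<longleftrightarrow> supp c \<subseteq> {\<sigma>. simplex n d \<sigma>}"

text \<open>Boundary (reduced convention): the coefficient of tau in the boundary of c
is the sum over v not in tau of (-1)^(i-1) c(tau + v), where i is the position of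
v in the increasingly ordered simplex tau + v, i.e. i - 1 = #{x in tau. x < v}.\<close>
definition bd :: "nat \<Rightarrow> (nat set \<Rightarrow> 'a::comm_ring_1) \<Rightarrow> nat set \<Rightarrow> 'a" where
  "bd n c \<tau> = (\<Sum>v \<in> {1..n} - \<tau>. (-1) ^ card {x \<in> \<tau>. x < v} * c (insert v \<tau>))"

definition is_cycle :: "nat \<Rightarrow> nat \<Rightarrow> (nat set \<Rightarrow> 'a::comm_ring_1) \<Rightarrow> bool" where
  "is_cycle n d Z \<longleftrightarrow> is_chain n d Z \<and> bd n Z = (\<lambda>_. 0)"

definition simple_cycle :: "nat \<Rightarrow> nat \<Rightarrow> (nat set \<Rightarrow> 'a::field) \<Rightarrow> bool" where
  "simple_cycle n d Z \<longleftrightarrow> is_cycle n d Z \<and> Z \<noteq> (\<lambda>_. 0) \<and>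
     (\<forall>Y. is_cycle n d Y \<and> supp Y \<subseteq> supp Z \<longrightarrow> (\<exists>a. Y = (\<lambda>\<sigma>. a * Z \<sigma>)))"

definition cplx :: "nat set set \<Rightarrow> nat set set" where
  "cplx S = {\<tau>. \<exists>\<sigma>\<in>S. \<tau> \<subseteq> \<sigma>}"

definition cycles_on :: "nat \<Rightarrow> nat \<Rightarrow> nat set set \<Rightarrow> (nat set \<Rightarrow> 'a::field) set" where
  "cycles_on n k K = {c. is_cycle n k c \<and> supp c \<subseteq> K}"

definition boundaries_on :: "nat \<Rightarrow> nat \<Rightarrow> nat set set \<Rightarrow> (nat set \<Rightarrow> 'a::field) set" where
  "boundaries_on n k K = {bd n B | B. is_chain n (k + 1) B \<and> supp B \<subseteq> K}"

definition cscale :: "'a::field \<Rightarrow> (nat set \<Rightarrow> 'a) \<Rightarrow> nat set \<Rightarrow> 'a" where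
  "cscale a c = (\<lambda>\<sigma>. a * c \<sigma>)"

lemma vector_space_cscale: "vector_space (cscale :: 'a::field \<Rightarrow> _)"
  by unfold_locales (auto simp: cscale_def algebra_simps)

text \<open>Reduced Betti number: dim of (k-cycles on K) / (boundaries of (k+1)-chains on K),
computed as dim Z_k - dim B_k (both finite-dimensional, B_k a subspace of Z_k).\<close>
definition betti :: "'a::field itself \<Rightarrow> nat \<Rightarrow> nat \<Rightarrow> nat set set \<Rightarrow> nat" where
  "betti _ n k K = vector_space.dim (cscale :: 'a \<Rightarrow> _) (cycles_on n k K :: (nat set \<Rightarrow> 'a) set)
                 - vector_space.dim (cscale :: 'a \<Rightarrow> _) (boundaries_on n k K :: (nat set \<Rightarrow> 'a) set)"

definition facet_adj :: "nat \<Rightarrow> nat set \<Rightarrow> nat set \<Rightarrow> bool" where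
  "facet_adj d \<sigma> \<tau> \<longleftrightarrow> \<sigma> \<noteq> \<tau> \<and> card (\<sigma> \<inter> \<tau>) = d"

definition num_components :: "nat \<Rightarrow> nat set set \<Rightarrow> nat" where
  "num_components d V = card (V // (rtrancl {(\<sigma>, \<tau>). \<sigma> \<in> V \<and> \<tau> \<in> V \<and> facet_adj d \<sigma> \<tau>}))"

end

theory Submission
  imports Defs
begin

text \<open>Let \<open>C\<close> range over the connected components of \<open>G\<^sub>d(Z)\<close> with \<open>D\<close> deleted and let \<open>Z|C\<close> be the
  restriction of \<open>Z\<close> to \<open>C\<close>. Since \<open>\<partial>Z = 0\<close>, a \<open>(d-1)\<close>-face on which \<open>\<partial>(Z|C)\<close> does not vanish is
  shared with a simplex of \<open>Supp(Z)\<close> outside \<open>C\<close>; that simplex is adjacent to \<open>C\<close>, hence lies in \<open>D\<close>.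
  So every \<open>\<partial>(Z|C)\<close> is a \<open>(d-1)\<close>-cycle of \<open>K(D)\<close>. If \<open>\<Sum>\<^sub>C a\<^sub>C \<partial>(Z|C) = \<partial>B\<close> with \<open>B\<close> on \<open>K(D)\<close>,
  then \<open>B\<close> is supported on \<open>D\<close> and \<open>\<Sum>\<^sub>C a\<^sub>C Z|C - B\<close> is a \<open>d\<close>-cycle supported in \<open>Supp(Z)\<close>; by
  simplicity it equals \<open>\<alpha> Z\<close>, which forces \<open>a\<^sub>C = \<alpha>\<close> for all \<open>C\<close>. Hence the classes of all but one
  of the \<open>\<partial>(Z|C)\<close> are linearly independent in \<open>H\<^sub>d\<^sub>-\<^sub>1(K(D))\<close>.\<close>

lemma (in vector_space) dim_add_card_le_dim:
  assumes "finite I" and "subspace B" and "B \<subseteq> V" and "g ` I \<subseteq> V"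
    and "V \<subseteq> span W" and "finite W"
    and indep_mod_B: "\<And>a. (\<Sum>i\<in>I. a i *s g i) \<in> B \<Longrightarrow> \<forall>i\<in>I. a i = 0"
  shows "dim B + card I \<le> dim V"
proof -
  have unit_sum: "(\<Sum>k\<in>I. (if k = i then 1 else 0) *s g k) = g i" if "i \<in> I" for i
  proof -
    have "(\<Sum>k\<in>I. (if k = i then 1 else 0) *s g k) = (\<Sum>k\<in>I. if k = i then g k else 0)"
      by (rule sum.cong) auto
    then show ?thesis using \<open>finite I\<close> that by simp
  qed
  have g_notin_B: "g i \<notin> B" if "i \<in> I" for i
  proof
    assume "g i \<in> B"
    then have "(\<Sum>k\<in>I. (if k = i then 1 else 0) *s g k) \<in> B" using unit_sum[OF that] by simp
    from indep_mod_B[OF this] that show False by auto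
  qed
  have inj: "inj_on g I"
  proof (rule inj_onI, rule ccontr)
    fix i j assume ij: "i \<in> I" "j \<in> I" "g i = g j" "i \<noteq> j"
    let ?a = "\<lambda>k. (if k = i then 1 else 0 :: 'a) - (if k = j then 1 else 0)"
    have "(\<Sum>k\<in>I. ?a k *s g k) = g i - g j"
      by (simp add: scale_left_diff_distrib sum_subtractf unit_sum ij)
    then have "(\<Sum>k\<in>I. ?a k *s g k) \<in> B" using \<open>g i = g j\<close> subspace_0[OF \<open>subspace B\<close>] by simp
    from indep_mod_B[OF this] have "?a i = 0" using ij(1) by blast
    then show False using ij(4) by simp
  qed
  obtain b where b: "b \<subseteq> B" "independent b" "B \<subseteq> span b" "card b = dim B"
    using basis_exists by blast
  have "finite b"
    using independent_span_bound[OF \<open>finite W\<close> \<open>independent b\<close>] b(1) assms(3,5) by blast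
  have disjoint: "b \<inter> g ` I = {}" using b(1) g_notin_B by blast
  have "independent (b \<union> g ` I)"
    unfolding dependent_finite[OF finite_UnI[OF \<open>finite b\<close> finite_imageI[OF \<open>finite I\<close>]]]
  proof clarify
    fix u v assume v: "v \<in> b \<union> g ` I" "u v \<noteq> 0" and zero: "(\<Sum>v\<in>b \<union> g ` I. u v *s v) = 0"
    have "(\<Sum>v\<in>b \<union> g ` I. u v *s v) = (\<Sum>v\<in>b. u v *s v) + (\<Sum>i\<in>I. u (g i) *s g i)"
      using \<open>finite b\<close> \<open>finite I\<close> disjoint inj by (simp add: sum.union_disjoint sum.reindex)
    then have sum_g: "(\<Sum>i\<in>I. u (g i) *s g i) = - (\<Sum>v\<in>b. u v *s v)"
      using zero by (metis add_eq_0_iff)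
    have "(\<Sum>v\<in>b. u v *s v) \<in> B"
      using b(1) \<open>subspace B\<close> by (intro subspace_sum subspace_scale) auto
    then have u_g: "\<forall>i\<in>I. u (g i) = 0"
      using indep_mod_B[of "u \<circ> g"] subspace_neg[OF \<open>subspace B\<close>] sum_g by simp
    then have "(\<Sum>v\<in>b. u v *s v) = 0" using sum_g by simp
    then have "\<forall>v\<in>b. u v = 0" using independentD[OF b(2) \<open>finite b\<close>] by blast
    then show False using v u_g by blast
  qed
  obtain A where A: "A \<subseteq> V" "independent A" "V \<subseteq> span A" "card A = dim V"
    using basis_exists by blast
  have "finite A" using independent_span_bound[OF \<open>finite W\<close> A(2)] A(1) assms(5) by blast
  have "card (b \<union> g ` I) \<le> card A"
    using independent_span_bound[OF \<open>finite A\<close> \<open>independent (b \<union> g ` I)\<close>] b(1) assms(3,4) A(3)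
    by blast
  moreover have "card (b \<union> g ` I) = dim B + card I"
    using card_Un_disjoint[OF \<open>finite b\<close> _ disjoint] \<open>finite I\<close> card_image[OF inj] b(4) by simp
  ultimately show ?thesis using A(4) by simp
qed

lemma sum_offdiag_antisym:
  fixes f :: "'b::linorder \<Rightarrow> 'b \<Rightarrow> 'a::ab_group_add"
  assumes "finite M" and antisym: "\<And>w v. w \<in> M \<Longrightarrow> v \<in> M \<Longrightarrow> w < v \<Longrightarrow> f v w = - f w v"
  shows "(\<Sum>w\<in>M. \<Sum>v\<in>M - {w}. f w v) = 0"
proof -
  let ?L = "{p \<in> M \<times> M. fst p < snd p}" and ?U = "{p \<in> M \<times> M. snd p < fst p}"
  have "(\<Sum>w\<in>M. \<Sum>v\<in>M - {w}. f w v) = (\<Sum>(w, v)\<in>(SIGMA w:M. M - {w}). f w v)"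
    using \<open>finite M\<close> by (subst sum.Sigma) auto
  also have "(SIGMA w:M. M - {w}) = ?L \<union> ?U" by auto
  also have "(\<Sum>(w, v)\<in>?L \<union> ?U. f w v) = (\<Sum>(w, v)\<in>?L. f w v) + (\<Sum>(w, v)\<in>?U. f w v)"
    using \<open>finite M\<close> by (intro sum.union_disjoint) auto
  also have "?U = prod.swap ` ?L" by force
  also have "(\<Sum>(w, v)\<in>prod.swap ` ?L. f w v) = (\<Sum>(w, v)\<in>?L. - f w v)"
    by (auto simp: sum.reindex antisym intro!: sum.cong)
  finally show ?thesis by (simp add: sum_negf case_prod_unfold)
qed

lemma card_less_insert:
  assumes "w \<notin> \<rho>"
  shows "card {x \<in> insert w \<rho>. x < v} = card {x \<in> \<rho>. x < (v::nat)} + (if w < v then 1 else 0)"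
proof -
  have "{x \<in> insert w \<rho>. x < v} = (if w < v then insert w {x \<in> \<rho>. x < v} else {x \<in> \<rho>. x < v})"
    by auto
  moreover have "finite {x \<in> \<rho>. x < v}" by (rule finite_subset[of _ "{..<v}"]) auto
  ultimately show ?thesis using assms by simp
qed

lemma bd_bd: "bd n (bd n (c :: nat set \<Rightarrow> 'a::comm_ring_1)) = (\<lambda>_. 0)"
proof
  fix \<rho>
  define s where "s (r :: nat set) v = (-1 :: 'a) ^ card {x \<in> r. x < v}" for r v
  define M where "M = {1..n} - \<rho>"
  have "bd n (bd n c) \<rho> = (\<Sum>w\<in>M. \<Sum>v\<in>M - {w}. s \<rho> w * s (insert w \<rho>) v * c (insert v (insert w \<rho>)))"
    unfolding bd_def
  proof (intro sum.cong)
    fix w assume "w \<in> M"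
    have "{1..n} - insert w \<rho> = M - {w}" by (auto simp: M_def)
    then show "(-1) ^ card {x \<in> \<rho>. x < w} * (\<Sum>v\<in>{1..n} - insert w \<rho>.
        (-1) ^ card {x \<in> insert w \<rho>. x < v} * c (insert v (insert w \<rho>))) =
      (\<Sum>v\<in>M - {w}. s \<rho> w * s (insert w \<rho>) v * c (insert v (insert w \<rho>)))"
      by (simp add: s_def sum_distrib_left mult.assoc)
  qed (simp add: M_def)
  also have "\<dots> = 0"
  proof (rule sum_offdiag_antisym)
    fix w v assume "w \<in> M" "v \<in> M" "w < v"
    then have fresh: "w \<notin> \<rho>" "v \<notin> \<rho>" by (auto simp: M_def)
    \<comment> \<open>inserting \<open>v\<close> leaves the position of the smaller \<open>w\<close> unchanged; inserting \<open>w\<close> shifts \<open>v\<close>\<close>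
    have "s (insert v \<rho>) w = s \<rho> w" "s (insert w \<rho>) v = - s \<rho> v"
      unfolding s_def card_less_insert[OF fresh(1)] card_less_insert[OF fresh(2)]
      using \<open>w < v\<close> by simp_all
    then show "s \<rho> v * s (insert v \<rho>) w * c (insert w (insert v \<rho>)) =
        - (s \<rho> w * s (insert w \<rho>) v * c (insert v (insert w \<rho>)))"
      by (simp add: insert_commute)
  qed (simp add: M_def)
  finally show "bd n (bd n c) \<rho> = 0" .
qed

lemma finite_simplex: "simplex n d \<sigma> \<Longrightarrow> finite \<sigma>"
  unfolding simplex_def using finite_subset by blast

lemma finite_simplices: "finite {\<sigma>. simplex n d \<sigma>}"
  by (rule finite_subset[of _ "Pow {1..n}"]) (auto simp: simplex_def)

lemma finite_supp_chain: "is_chain n d c \<Longrightarrow> finite (supp c)"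
  unfolding is_chain_def using finite_simplices finite_subset by blast

lemma bd_add: "bd n (\<lambda>\<sigma>. f \<sigma> + g \<sigma>) \<tau> = bd n f \<tau> + bd n g \<tau>"
  unfolding bd_def by (simp add: sum.distrib distrib_left)

lemma bd_diff: "bd n (\<lambda>\<sigma>. f \<sigma> - g \<sigma>) \<tau> = bd n f \<tau> - bd n g \<tau>"
  unfolding bd_def by (simp add: sum_subtractf right_diff_distrib)

lemma bd_cmult: "bd n (\<lambda>\<sigma>. a * f \<sigma>) \<tau> = a * bd n f \<tau>"
  unfolding bd_def by (simp add: sum_distrib_left mult.left_commute)

lemma bd_sum: "bd n (\<lambda>\<sigma>. \<Sum>i\<in>I. f i \<sigma>) \<tau> = (\<Sum>i\<in>I. bd n (f i) \<tau>)"
  unfolding bd_def by (simp add: sum_distrib_left sum.swap[of _ I] mult.left_commute)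

lemma bd_nonzero_coface:
  assumes "bd n c \<tau> \<noteq> 0"
  obtains v where "v \<in> {1..n}" "v \<notin> \<tau>" "c (insert v \<tau>) \<noteq> 0"
proof -
  from assms obtain v where "v \<in> {1..n} - \<tau>" "(-1) ^ card {x \<in> \<tau>. x < v} * c (insert v \<tau>) \<noteq> 0"
    unfolding bd_def by (meson sum.neutral)
  then show thesis by (intro that) auto
qed

lemma is_chain_bd: "is_chain n (Suc k) c \<Longrightarrow> is_chain n k (bd n c)"
  unfolding is_chain_def
proof (intro subsetI CollectI)
  fix \<tau> assume chain: "supp c \<subseteq> {\<sigma>. simplex n (Suc k) \<sigma>}" and "\<tau> \<in> supp (bd n c)"
  then obtain v where "v \<notin> \<tau>" "c (insert v \<tau>) \<noteq> 0"
    by (auto simp: supp_def elim: bd_nonzero_coface)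
  then have "simplex n (Suc k) (insert v \<tau>)" using chain by (auto simp: supp_def)
  moreover have "finite \<tau>" using calculation by (auto dest: finite_simplex)
  ultimately show "simplex n k \<tau>" using \<open>v \<notin> \<tau>\<close> by (auto simp: simplex_def)
qed

lemma supp_bd_subset_cplx: "supp c \<subseteq> cplx S \<Longrightarrow> supp (bd n c) \<subseteq> cplx S"
  by (auto simp: supp_def cplx_def elim!: bd_nonzero_coface) blast

lemma simplex_in_cplx_top:
  assumes "\<And>\<delta>. \<delta> \<in> S \<Longrightarrow> simplex n d \<delta>" and "simplex n d \<sigma>" and "\<sigma> \<in> cplx S"
  shows "\<sigma> \<in> S"
proof -
  obtain \<delta> where "\<delta> \<in> S" "\<sigma> \<subseteq> \<delta>" using \<open>\<sigma> \<in> cplx S\<close> by (auto simp: cplx_def)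
  moreover have "finite \<delta>" using assms(1)[OF \<open>\<delta> \<in> S\<close>] by (rule finite_simplex)
  ultimately have "\<sigma> = \<delta>" using assms(1) assms(2) by (metis card_subset_eq simplex_def)
  with \<open>\<delta> \<in> S\<close> show ?thesis by simp
qed

interpretation chains: vector_space "cscale :: 'a::field \<Rightarrow> (nat set \<Rightarrow> 'a) \<Rightarrow> nat set \<Rightarrow> 'a"
  by (rule vector_space_cscale)

lemma sum_cscale_apply: "(\<Sum>i\<in>I. cscale (a i) (f i)) \<sigma> = (\<Sum>i\<in>I. a i * f i \<sigma>)"
  by (induct I rule: infinite_finite_induct) (auto simp: cscale_def)

lemma subspace_boundaries_on:
  "chains.subspace (boundaries_on n k K :: (nat set \<Rightarrow> 'a::field) set)"
  unfolding chains.subspace_def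
proof (intro conjI ballI allI)
  show "0 \<in> boundaries_on n k K"
    unfolding boundaries_on_def
    by (intro CollectI exI[of _ "\<lambda>_. 0"]) (simp add: bd_def is_chain_def supp_def zero_fun_def fun_eq_iff)
next
  fix x y :: "nat set \<Rightarrow> 'a" assume "x \<in> boundaries_on n k K" "y \<in> boundaries_on n k K"
  then obtain B B' where "x = bd n B" "is_chain n (k + 1) B" "supp B \<subseteq> K"
    and "y = bd n B'" "is_chain n (k + 1) B'" "supp B' \<subseteq> K"
    by (auto simp: boundaries_on_def)
  moreover have "supp (\<lambda>\<sigma>. B \<sigma> + B' \<sigma>) \<subseteq> supp B \<union> supp B'" by (auto simp: supp_def)
  ultimately show "x + y \<in> boundaries_on n k K"
    unfolding boundaries_on_def is_chain_def
    by (intro CollectI exI[of _ "\<lambda>\<sigma>. B \<sigma> + B' \<sigma>"]) (auto simp: fun_eq_iff bd_add)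
next
  fix a and x :: "nat set \<Rightarrow> 'a" assume "x \<in> boundaries_on n k K"
  then obtain B where "x = bd n B" "is_chain n (k + 1) B" "supp B \<subseteq> K"
    by (auto simp: boundaries_on_def)
  moreover have "supp (\<lambda>\<sigma>. a * B \<sigma>) \<subseteq> supp B" by (auto simp: supp_def)
  ultimately show "cscale a x \<in> boundaries_on n k K"
    unfolding boundaries_on_def is_chain_def
    by (intro CollectI exI[of _ "\<lambda>\<sigma>. a * B \<sigma>"]) (auto simp: fun_eq_iff bd_cmult cscale_def)
qed

lemma boundaries_on_subset_cycles_on: "boundaries_on n k (cplx S) \<subseteq> cycles_on n k (cplx S)"
  by (auto simp: boundaries_on_def cycles_on_def is_cycle_def bd_bd
      intro: is_chain_bd supp_bd_subset_cplx[THEN subsetD])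

lemma chain_in_span_simplices:
  assumes "is_chain n k c"
  shows "c \<in> chains.span ((\<lambda>\<sigma> \<tau>. if \<tau> = \<sigma> then 1 else 0) ` {\<sigma>. simplex n k \<sigma>})"
proof -
  have "c = (\<Sum>\<sigma>\<in>{\<sigma>. simplex n k \<sigma>}. cscale (c \<sigma>) (\<lambda>\<tau>. if \<tau> = \<sigma> then 1 else 0))"
  proof
    fix \<tau>
    have "(\<Sum>\<sigma>\<in>{\<sigma>. simplex n k \<sigma>}. c \<sigma> * (if \<tau> = \<sigma> then 1 else 0)) = (if simplex n k \<tau> then c \<tau> else 0)"
      using finite_simplices[of n k] by (simp add: if_distrib cong: if_cong)
    also have "\<dots> = c \<tau>" using assms by (auto simp: is_chain_def supp_def)
    finally show "c \<tau> = (\<Sum>\<sigma>\<in>{\<sigma>. simplex n k \<sigma>}. cscale (c \<sigma>) (\<lambda>\<tau>. if \<tau> = \<sigma> then 1 else 0)) \<tau>"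
      by (simp add: sum_cscale_apply)
  qed
  also have "\<dots> \<in> chains.span ((\<lambda>\<sigma> \<tau>. if \<tau> = \<sigma> then 1 else 0) ` {\<sigma>. simplex n k \<sigma>})"
    by (intro chains.span_sum chains.span_scale chains.span_base) auto
  finally show ?thesis .
qed

lemma rtrancl_Image_closed:
  assumes "E \<subseteq> A \<times> A" and "x \<in> A"
  shows "E\<^sup>* `` {x} \<subseteq> A"
proof -
  have "E\<^sup>* `` A = A" using assms(1) by (intro Image_closed_trancl) blast
  then show ?thesis using assms(2) by blast
qed

lemma equiv_rtrancl_restrict:
  assumes "E \<subseteq> A \<times> A" and "sym E"
  shows "equiv A (E\<^sup>* \<inter> A \<times> A)"
  using sym_rtrancl[OF \<open>sym E\<close>]
  by (auto simp: equiv_def refl_on_def sym_def intro!: transI intro: rtrancl_trans)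

lemma quotient_rtrancl_restrict:
  assumes "E \<subseteq> A \<times> A"
  shows "A // E\<^sup>* = A // (E\<^sup>* \<inter> A \<times> A)"
  unfolding quotient_def using rtrancl_Image_closed[OF assms] by blast

text \<open>The closure in \<open>num_components\<close> is reflexive on all simplices, not only on \<open>V\<close>; restricted
  to \<open>V \<times> V\<close> it becomes an equivalence relation on \<open>V\<close> with the same classes.\<close>
definition facet_conn :: "nat \<Rightarrow> nat set set \<Rightarrow> nat set rel" where
  "facet_conn d V = {(\<sigma>, \<tau>). \<sigma> \<in> V \<and> \<tau> \<in> V \<and> facet_adj d \<sigma> \<tau>}\<^sup>* \<inter> V \<times> V"

lemma equiv_facet_conn: "equiv V (facet_conn d V)"
  unfolding facet_conn_def
  by (rule equiv_rtrancl_restrict) (auto simp: sym_def facet_adj_def Int_commute)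

lemma num_components_eq_card_quotient: "num_components d V = card (V // facet_conn d V)"
  unfolding num_components_def facet_conn_def by (subst quotient_rtrancl_restrict) auto

lemma facet_conn_adj: "\<sigma> \<in> V \<Longrightarrow> \<tau> \<in> V \<Longrightarrow> facet_adj d \<sigma> \<tau> \<Longrightarrow> (\<sigma>, \<tau>) \<in> facet_conn d V"
  by (auto simp: facet_conn_def)

lemma finite_facet_components:
  "is_chain n d c \<Longrightarrow> finite ((supp c - D) // facet_conn d' (supp c - D))"
  by (rule finite_quotient) (auto simp: facet_conn_def dest: finite_supp_chain)

definition chain_restrict :: "nat set set \<Rightarrow> (nat set \<Rightarrow> 'a::zero) \<Rightarrow> nat set \<Rightarrow> 'a" where
  "chain_restrict C c \<sigma> = (if \<sigma> \<in> C then c \<sigma> else 0)"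

lemma sum_chain_restrict_partition:
  fixes c :: "nat set \<Rightarrow> 'a::semiring_0"
  assumes "equiv V R" and "finite (V // R)" and "C \<in> V // R" and "\<sigma> \<in> C"
  shows "(\<Sum>C'\<in>V // R. a C' * chain_restrict C' c \<sigma>) = a C * c \<sigma>"
proof -
  have "\<sigma> \<in> C' \<longleftrightarrow> C' = C" if "C' \<in> V // R" for C'
    using quotient_disj[OF assms(1) that assms(3)] assms(4) by blast
  then have "(\<Sum>C'\<in>V // R. a C' * chain_restrict C' c \<sigma>) = (\<Sum>C'\<in>V // R. if C' = C then a C * c \<sigma> else 0)"
    by (intro sum.cong) (auto simp: chain_restrict_def)
  then show ?thesis using assms(2,3) by simp
qed

lemma supp_bd_restrict_component:
  assumes cyc: "is_cycle n d Z" and C: "C \<in> (supp Z - D) // facet_conn d (supp Z - D)"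
  shows "supp (bd n (chain_restrict C Z)) \<subseteq> cplx D"
proof
  let ?V = "supp Z - D"
  fix \<tau> assume "\<tau> \<in> supp (bd n (chain_restrict C Z))"
  then have nonzero: "bd n (chain_restrict C Z) \<tau> \<noteq> 0" by (simp add: supp_def)
  then obtain u where "u \<notin> \<tau>" "chain_restrict C Z (insert u \<tau>) \<noteq> 0"
    by (rule bd_nonzero_coface)
  then have u: "u \<notin> \<tau>" "insert u \<tau> \<in> C" "Z (insert u \<tau>) \<noteq> 0"
    by (auto simp: chain_restrict_def split: if_splits)
  have "bd n (\<lambda>\<sigma>. Z \<sigma> - chain_restrict C Z \<sigma>) \<tau> = - bd n (chain_restrict C Z) \<tau>"
    using cyc by (simp add: bd_diff is_cycle_def)
  then have "bd n (\<lambda>\<sigma>. Z \<sigma> - chain_restrict C Z \<sigma>) \<tau> \<noteq> 0" using nonzero by simp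
  then obtain v where "v \<notin> \<tau>" "Z (insert v \<tau>) - chain_restrict C Z (insert v \<tau>) \<noteq> 0"
    by (rule bd_nonzero_coface)
  then have v: "v \<notin> \<tau>" "insert v \<tau> \<notin> C" "Z (insert v \<tau>) \<noteq> 0"
    by (auto simp: chain_restrict_def split: if_splits)
  have "simplex n d (insert u \<tau>)" using u(3) cyc by (auto simp: is_cycle_def is_chain_def supp_def)
  moreover have "finite \<tau>" using calculation by (auto dest: finite_simplex)
  ultimately have "card \<tau> = d" using u(1) by (simp add: simplex_def)
  moreover have "insert u \<tau> \<inter> insert v \<tau> = \<tau>" and "insert u \<tau> \<noteq> insert v \<tau>"
    using u(1,2) v(1,2) by auto
  ultimately have adj: "facet_adj d (insert u \<tau>) (insert v \<tau>)" by (simp add: facet_adj_def)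
  show "\<tau> \<in> cplx D"
  proof (rule ccontr)
    assume "\<tau> \<notin> cplx D"
    then have "insert v \<tau> \<notin> D" by (auto simp: cplx_def)
    then have "insert v \<tau> \<in> ?V" using v(3) by (simp add: supp_def)
    moreover have "insert u \<tau> \<in> ?V" using in_quotient_imp_subset[OF equiv_facet_conn C] u(2) by blast
    ultimately have "(insert u \<tau>, insert v \<tau>) \<in> facet_conn d ?V" using adj by (simp add: facet_conn_adj)
    then have "insert v \<tau> \<in> C" by (rule in_quotient_imp_closed[OF equiv_facet_conn C u(2)])
    with v(2) show False by contradiction
  qed
qed

lemma bd_restrict_component_in_cycles_on:
  assumes "is_cycle n d Z" and "d \<ge> 1" and "C \<in> (supp Z - D) // facet_conn d (supp Z - D)"
  shows "bd n (chain_restrict C Z) \<in> cycles_on n (d - 1) (cplx D)"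
proof -
  have "is_chain n (Suc (d - 1)) (chain_restrict C Z)"
    using assms(1,2) by (auto simp: is_cycle_def is_chain_def supp_def chain_restrict_def)
  then show ?thesis
    using supp_bd_restrict_component[OF assms(1,3)]
    by (auto simp: cycles_on_def is_cycle_def bd_bd intro: is_chain_bd)
qed

lemma component_relation_constant:
  fixes Z :: "nat set \<Rightarrow> 'a::field"
  assumes simple: "simple_cycle n d Z" and "D \<subseteq> supp Z" and "d \<ge> 1"
  defines "P \<equiv> (supp Z - D) // facet_conn d (supp Z - D)"
  assumes relation: "(\<Sum>C\<in>P. cscale (a C) (bd n (chain_restrict C Z))) \<in> boundaries_on n (d - 1) (cplx D)"
  shows "\<exists>\<alpha>. \<forall>C\<in>P. a C = \<alpha>"
proof -
  have cyc: "is_cycle n d Z" using simple by (simp add: simple_cycle_def)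
  have "finite P"
    using cyc finite_facet_components unfolding P_def is_cycle_def by blast
  obtain B where B: "is_chain n d B" "supp B \<subseteq> cplx D"
    and bd_B: "bd n B = (\<Sum>C\<in>P. cscale (a C) (bd n (chain_restrict C Z)))"
    using relation \<open>d \<ge> 1\<close> by (auto simp: boundaries_on_def)
  have B_D: "supp B \<subseteq> D"
  proof
    fix \<sigma> assume "\<sigma> \<in> supp B"
    show "\<sigma> \<in> D"
    proof (rule simplex_in_cplx_top)
      show "simplex n d \<delta>" if "\<delta> \<in> D" for \<delta>
        using that \<open>D \<subseteq> supp Z\<close> cyc by (auto simp: is_cycle_def is_chain_def)
      show "simplex n d \<sigma>" using \<open>\<sigma> \<in> supp B\<close> B(1) by (auto simp: is_chain_def)
      show "\<sigma> \<in> cplx D" using \<open>\<sigma> \<in> supp B\<close> B(2) by blast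
    qed
  qed
  define Y where "Y \<sigma> = (\<Sum>C\<in>P. a C * chain_restrict C Z \<sigma>) - B \<sigma>" for \<sigma>
  have "Y \<sigma> = 0" if "Z \<sigma> = 0" for \<sigma>
  proof -
    have "B \<sigma> = 0" using that B_D \<open>D \<subseteq> supp Z\<close> by (auto simp: supp_def)
    moreover have "chain_restrict C Z \<sigma> = 0" for C using that by (simp add: chain_restrict_def)
    ultimately show ?thesis by (simp add: Y_def)
  qed
  then have "supp Y \<subseteq> supp Z" by (auto simp: supp_def)
  moreover have "bd n Y = (\<lambda>_. 0)"
    unfolding Y_def by (simp add: fun_eq_iff bd_diff bd_sum bd_cmult bd_B sum_cscale_apply)
  ultimately have "is_cycle n d Y" using cyc by (auto simp: is_cycle_def is_chain_def)
  then obtain \<alpha> where \<alpha>: "Y = (\<lambda>\<sigma>. \<alpha> * Z \<sigma>)"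
    using simple \<open>supp Y \<subseteq> supp Z\<close> by (auto simp: simple_cycle_def)
  have "a C = \<alpha>" if "C \<in> P" for C
  proof -
    obtain \<sigma> where "\<sigma> \<in> C" using in_quotient_imp_non_empty[OF equiv_facet_conn] \<open>C \<in> P\<close>
      unfolding P_def by blast
    then have "\<sigma> \<in> supp Z - D" using in_quotient_imp_subset[OF equiv_facet_conn] \<open>C \<in> P\<close>
      unfolding P_def by blast
    then have "B \<sigma> = 0" and "Z \<sigma> \<noteq> 0" using B_D by (auto simp: supp_def)
    then have "Y \<sigma> = a C * Z \<sigma>"
      using sum_chain_restrict_partition[OF equiv_facet_conn \<open>finite P\<close>[unfolded P_def]]
        \<open>C \<in> P\<close> \<open>\<sigma> \<in> C\<close> by (simp add: Y_def P_def)
    with \<alpha> \<open>Z \<sigma> \<noteq> 0\<close> show "a C = \<alpha>" by simp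
  qed
  then show ?thesis by blast
qed

lemma component_boundaries_independent:
  fixes Z :: "nat set \<Rightarrow> 'a::field"
  assumes "simple_cycle n d Z" and "D \<subseteq> supp Z" and "d \<ge> 1"
  defines "P \<equiv> (supp Z - D) // facet_conn d (supp Z - D)"
  assumes "C\<^sub>0 \<in> P"
    and "(\<Sum>C\<in>P - {C\<^sub>0}. cscale (a C) (bd n (chain_restrict C Z))) \<in> boundaries_on n (d - 1) (cplx D)"
  shows "\<forall>C\<in>P - {C\<^sub>0}. a C = 0"
proof -
  have "finite P"
    using assms(1) finite_facet_components unfolding P_def simple_cycle_def is_cycle_def by blast
  then have "(\<Sum>C\<in>P. cscale ((a(C\<^sub>0 := 0)) C) (bd n (chain_restrict C Z))) =
      (\<Sum>C\<in>P - {C\<^sub>0}. cscale (a C) (bd n (chain_restrict C Z)))"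
    using \<open>C\<^sub>0 \<in> P\<close> by (simp add: sum.remove cscale_def zero_fun_def)
  then obtain \<alpha> where "\<forall>C\<in>P. (a(C\<^sub>0 := 0)) C = \<alpha>"
    using component_relation_constant[OF assms(1-3), of "a(C\<^sub>0 := 0)"] assms(6) unfolding P_def by auto
  then show ?thesis using \<open>C\<^sub>0 \<in> P\<close> by (metis DiffE fun_upd_other fun_upd_same singletonI)
qed

theorem corollary5p2:
  fixes Z :: "nat set \<Rightarrow> 'a::field" and n d :: nat and D :: "nat set set"
  assumes "d \<ge> 1"
    and "simple_cycle n d Z"
    and "D \<subseteq> supp Z"
  shows "num_components d (supp Z - D) \<le> 1 + betti TYPE('a) n (d - 1) (cplx D)"
proof -
  define P where "P = (supp Z - D) // facet_conn d (supp Z - D)"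
  have "finite P"
    using assms(2) finite_facet_components unfolding P_def simple_cycle_def is_cycle_def by blast
  show ?thesis
  proof (cases "P = {}")
    case True
    then show ?thesis by (simp add: num_components_eq_card_quotient P_def[symmetric])
  next
    case False
    then obtain C\<^sub>0 where "C\<^sub>0 \<in> P" by blast
    have "chains.dim (boundaries_on n (d - 1) (cplx D) :: (nat set \<Rightarrow> 'a) set) + card (P - {C\<^sub>0})
        \<le> chains.dim (cycles_on n (d - 1) (cplx D) :: (nat set \<Rightarrow> 'a) set)"
    proof (rule chains.dim_add_card_le_dim)
      show "(\<lambda>C. bd n (chain_restrict C Z)) ` (P - {C\<^sub>0}) \<subseteq> cycles_on n (d - 1) (cplx D)"
        using assms bd_restrict_component_in_cycles_on unfolding P_def simple_cycle_def by blast
      show "cycles_on n (d - 1) (cplx D) \<subseteq> chains.span ((\<lambda>\<sigma> \<tau>. if \<tau> = \<sigma> then 1 else 0) ` {\<sigma>. simplex n (d - 1) \<sigma>})"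
        by (auto simp: cycles_on_def is_cycle_def intro: chain_in_span_simplices)
      show "\<forall>C\<in>P - {C\<^sub>0}. a C = 0"
        if "(\<Sum>C\<in>P - {C\<^sub>0}. cscale (a C) (bd n (chain_restrict C Z))) \<in> boundaries_on n (d - 1) (cplx D)" for a
        using component_boundaries_independent[OF assms(2,3,1)] \<open>C\<^sub>0 \<in> P\<close> that unfolding P_def by blast
    qed (use \<open>finite P\<close> finite_simplices subspace_boundaries_on boundaries_on_subset_cycles_on in blast)+
    then show ?thesis
      using \<open>finite P\<close> \<open>C\<^sub>0 \<in> P\<close> card_gt_0_iff[of P]
      by (simp add: betti_def num_components_eq_card_quotient P_def[symmetric])
  qed
qed

end
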